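(* Let $t$ be a positive integer. Then (i) $\mathfrak{d}_t(0,0)=1$; and for all integers $n,k$: (ii) $\mathfrak{d}_t(n,k)=0$ if $n<0$, or $k<0$, or $k>\min\{\lfloor (n-1+t)/2\rfloor,n\}$; (iii) otherwise, if $n>0$, then $\mathfrak{d}_t(n,k)=\mathfrak{d}_t(n-1,k-1)+\mathfrak{d}_t(n-1,k)$.
   Context: Let $x_j=x^j/j!$ for $j\ge0$ in $\mathbb{R}[x]$, let $S=\operatorname{span}\{x_j\}_{j\ge1}$, and let $D:S\to\mathbb{R}[x]$ be the linear isomorphism $D(y)=y'+y''$; put $D^{-N}=(D^{-1})^N$. For each integer $N\ge1$, $D^{-N}(x_{t-1})\in\operatorname{span}\{x_j\}_{j=1}^{t-1+N}$, and real numbers $\mathfrak{d}_t(i+N-1,i)$ ($0\le i\le t+N-2$) are defined by $D^{-N}(x_{t-1})=\sum_{i=0}^{t+N-2}(-1)^i\,\mathfrak{d}_t(i+N-1,i)\,x_{t-1+N-i}$. For any integer pair $(n,k)$ not of the form $(i+N-1,i)$ with $N\ge1$ and $0\le i\le t+N-2$, set $\mathfrak{d}_t(n,k)=0$. *)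

theory Defs
  imports Complex_Main "HOL-Computational_Algebra.Polynomial"
begin

definition xj :: "nat \<Rightarrow> real poly" where
  "xj j = monom (1 / fact j) j"

definition Dop :: "real poly \<Rightarrow> real poly" where
  "Dop y = pderiv y + pderiv (pderiv y)"

definition Dinv :: "real poly \<Rightarrow> real poly" where
  "Dinv p = (THE y. coeff y 0 = 0 \<and> Dop y = p)"

definition DinvPow :: "nat \<Rightarrow> real poly \<Rightarrow> real poly" where
  "DinvPow N = Dinv ^^ N"

text \<open>Coefficient of x_j in p (w.r.t. the basis x_j = x^j/j!).\<close>
definition xcoeff :: "real poly \<Rightarrow> nat \<Rightarrow> real" where
  "xcoeff p j = fact j * coeff p j"

text \<open>d_t(n,k): for (n,k) = (i+N-1, i) with N \<ge> 1 and 0 \<le> i \<le> t+N-2,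
  D^{-N}(x_{t-1}) = sum_i (-1)^i d_t(i+N-1,i) x_{t-1+N-i}; otherwise 0.
  Here N = n-k+1 and i = k.\<close>
definition dfrak :: "nat \<Rightarrow> int \<Rightarrow> int \<Rightarrow> real" where
  "dfrak t n k =
     (let N = n - k + 1 in
      if 0 \<le> k \<and> 1 \<le> N \<and> k \<le> int t + N - 2
      then (-1) ^ nat k * xcoeff (DinvPow (nat N) (xj (t - 1))) (nat (int t - 1 + N - k))
      else 0)"

end

theory Submission
  imports Defs
begin

text \<open>
  In the basis \<open>x_j\<close> the operator \<open>D\<close> is a shift, \<open>D x_(j+2) = x_(j+1) + x_j\<close>. Hence the
  \<open>x_j\<close>-coefficients \<open>a_N(j)\<close> of \<open>D^(-N) x_(t-1)\<close> satisfy \<open>a_(N+1)(j+1) + a_(N+1)(j+2) = a_N(j)\<close>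
  and \<open>a_(N+1)(0) = 0\<close>; and as \<open>D^(-1)\<close> raises degrees by at most one, \<open>a_N(j) = 0\<close> for
  \<open>j \<ge> t + N\<close>. Since \<open>d_t(n,k) = (-1)^k a_(n-k+1)(t+n-2k)\<close>, the recurrence for \<open>d_t\<close> is
  this coefficient recurrence with alternating signs, and \<open>d_t\<close> vanishes where the index
  \<open>t+n-2k\<close> reaches \<open>0\<close>.
\<close>

lemma Dop_add: "Dop (p + q) = Dop p + Dop q"
  by (simp add: Dop_def pderiv_add)

lemma Dop_diff: "Dop (p - q) = Dop p - Dop q"
  by (simp add: Dop_def pderiv_diff)

lemma Dop_smult: "Dop (smult c p) = smult c (Dop p)"
  by (simp add: Dop_def pderiv_smult smult_add_right)

lemma Dop_sum: "Dop (sum f A) = (\<Sum>x\<in>A. Dop (f x))"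
  by (induction A rule: infinite_finite_induct) (simp_all add: Dop_add, simp_all add: Dop_def)

lemma pderiv_xj_Suc: "pderiv (xj (Suc j)) = xj j"
  by (simp add: xj_def pderiv_monom field_simps del: of_nat_Suc)

lemma Dop_xj_Suc_Suc: "Dop (xj (Suc (Suc j))) = xj (Suc j) + xj j"
  by (simp add: Dop_def pderiv_xj_Suc)

lemma xcoeff_xj: "xcoeff (xj m) j = (if j = m then 1 else 0)"
  by (simp add: xcoeff_def xj_def coeff_monom)

lemma xcoeff_Dop: "xcoeff (Dop y) j = xcoeff y (Suc j) + xcoeff y (Suc (Suc j))"
  by (simp add: xcoeff_def Dop_def coeff_pderiv algebra_simps)

lemma coeff_Dop_degree:
  assumes "degree y = Suc e"
  shows "coeff (Dop y) e = of_nat (Suc e) * lead_coeff y"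
  using assms by (simp add: Dop_def coeff_pderiv coeff_eq_0)

lemma coeff_Dop_degree_neq_0:
  assumes "degree y = Suc e"
  shows "coeff (Dop y) e \<noteq> 0"
proof -
  have "y \<noteq> 0" using assms by auto
  then show ?thesis using coeff_Dop_degree[OF assms] by (simp del: of_nat_Suc)
qed

lemma degree_le_Suc_degree_Dop: "degree y \<le> Suc (degree (Dop y))"
proof (cases "degree y")
  case (Suc e)
  then show ?thesis using coeff_Dop_degree_neq_0 le_degree by fastforce
qed simp

lemma Dop_eq_0_imp_eq_0:
  assumes "coeff y 0 = 0" "Dop y = 0"
  shows "y = 0"
proof (cases "degree y")
  case 0
  then show ?thesis using assms(1) by (metis degree_0_id pCons_0_0)
next
  case (Suc e)
  then show ?thesis using coeff_Dop_degree_neq_0[OF Suc] assms(2) by simp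
qed

text \<open>A preimage of \<open>x_m\<close> in \<open>S\<close>, read off from \<open>D x_(m+2) = x_(m+1) + x_m\<close>.\<close>
fun xj_preimage :: "nat \<Rightarrow> real poly" where
  "xj_preimage 0 = xj 1"
| "xj_preimage (Suc m) = xj (Suc (Suc m)) - xj_preimage m"

lemma xj_preimage: "coeff (xj_preimage m) 0 = 0 \<and> Dop (xj_preimage m) = xj m"
proof (induction m)
  case 0
  have "Dop (xj 1) = xj 0"
    using pderiv_xj_Suc[of 0] by (simp add: Dop_def xj_def)
  then show ?case by (simp add: xj_def)
next
  case (Suc m)
  then show ?case by (simp add: Dop_diff Dop_xj_Suc_Suc, simp add: xj_def)
qed

lemma Dop_surj_from_S: "\<exists>y. coeff y 0 = 0 \<and> Dop y = p"
proof (intro exI conjI)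
  let ?y = "\<Sum>n\<le>degree p. smult (coeff p n * fact n) (xj_preimage n)"
  show "coeff ?y 0 = 0"
    using xj_preimage by (simp add: coeff_sum)
  have "Dop ?y = (\<Sum>n\<le>degree p. monom (coeff p n) n)"
    by (simp add: Dop_sum Dop_smult xj_preimage xj_def smult_monom)
  then show "Dop ?y = p"
    by (simp add: poly_as_sum_of_monoms)
qed

lemma Dinv: "coeff (Dinv p) 0 = 0 \<and> Dop (Dinv p) = p"
proof -
  have "\<exists>!y. coeff y 0 = 0 \<and> Dop y = p"
  proof -
    obtain y where y: "coeff y 0 = 0 \<and> Dop y = p"
      using Dop_surj_from_S by blast
    moreover have "z = y" if "coeff z 0 = 0 \<and> Dop z = p" for z
      using Dop_eq_0_imp_eq_0[of "z - y"] that y by (simp add: Dop_diff)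
    ultimately show ?thesis by blast
  qed
  then show ?thesis unfolding Dinv_def by (rule theI')
qed

lemma degree_Dinv_le: "degree (Dinv p) \<le> Suc (degree p)"
  using degree_le_Suc_degree_Dop[of "Dinv p"] Dinv by simp

lemma DinvPow_0 [simp]: "DinvPow 0 p = p"
  by (simp add: DinvPow_def)

lemma DinvPow_Suc: "DinvPow (Suc N) p = Dinv (DinvPow N p)"
  by (simp add: DinvPow_def)

lemma degree_DinvPow_le: "degree (DinvPow N p) \<le> degree p + N"
  by (induction N) (auto simp: DinvPow_Suc intro: order_trans[OF degree_Dinv_le])

lemma xcoeff_DinvPow_Suc_0: "xcoeff (DinvPow (Suc N) p) 0 = 0"
  using Dinv by (simp add: DinvPow_Suc xcoeff_def)

lemma xcoeff_DinvPow_Suc_recurrence: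
  "xcoeff (DinvPow (Suc N) p) (Suc j) + xcoeff (DinvPow (Suc N) p) (Suc (Suc j))
     = xcoeff (DinvPow N p) j"
  using xcoeff_Dop[of "DinvPow (Suc N) p" j] Dinv by (simp add: DinvPow_Suc)

lemma xcoeff_DinvPow_xj_eq_0:
  assumes "m + N < j"
  shows "xcoeff (DinvPow N (xj m)) j = 0"
proof -
  have "degree (DinvPow N (xj m)) < j"
    using degree_DinvPow_le[of N "xj m"] assms by (simp add: xj_def degree_monom_eq)
  then show ?thesis by (simp add: xcoeff_def coeff_eq_0)
qed

text \<open>
  For \<open>k \<ge> t + N\<close> the definition gives \<open>0\<close>, and truncated subtraction turns the index
  into \<open>0\<close>, where the coefficient vanishes as well; so no side condition is needed.
\<close>
lemma dfrak_nat:
  "dfrak t (int N + int k) (int k)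
     = (-1) ^ k * xcoeff (DinvPow (Suc N) (xj (t - 1))) (t + N - k)"
proof (cases "k + 1 \<le> t + N")
  case True
  have "nat (int t - 1 + (int N + 1) - int k) = t + N - k"
    using True by simp
  then show ?thesis
    using True unfolding dfrak_def Let_def by (simp add: nat_add_distrib)
next
  case False
  then show ?thesis
    by (simp add: dfrak_def Let_def xcoeff_DinvPow_Suc_0)
qed

lemma dfrak_eq_0_outside: "k < 0 \<or> n < k \<Longrightarrow> dfrak t n k = 0"
  by (auto simp: dfrak_def Let_def)

lemma dfrak_recurrence_nat:
  assumes "t \<ge> 1" "0 < N + k" "k < t + N"
  shows "dfrak t (int N + int k) (int k)
           = dfrak t (int N + int k - 1) (int k - 1) + dfrak t (int N + int k - 1) (int k)"
proof -
  let ?a = "\<lambda>N j. xcoeff (DinvPow N (xj (t - 1))) j"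
  obtain j where j: "t + N - k = Suc j"
    using assms(3) by (intro that[of "t + N - Suc k"]) arith
  have rec: "?a (Suc N) (Suc j) + ?a (Suc N) (Suc (Suc j)) = ?a N j"
    by (rule xcoeff_DinvPow_Suc_recurrence)
  show ?thesis
  proof (cases k)
    case 0
    then obtain N' where N': "N = Suc N'"
      using assms(2) by (cases N) auto
    have "?a (Suc N) (Suc (Suc j)) = 0"
      using j 0 assms(1) by (intro xcoeff_DinvPow_xj_eq_0) simp
    moreover have "dfrak t (int N + int k - 1) (int k) = ?a N j"
      using dfrak_nat[of t N' 0] 0 N' j by simp
    ultimately show ?thesis
      using rec dfrak_nat[of t N k] dfrak_eq_0_outside[of "int k - 1"] 0 j by simp
  next
    case (Suc k')
    have "t + N - k' = Suc (Suc j)"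
      using j Suc by arith
    then have left: "dfrak t (int N + int k - 1) (int k - 1) = (-1) ^ k' * ?a (Suc N) (Suc (Suc j))"
      using dfrak_nat[of t N k'] Suc by simp
    have right: "dfrak t (int N + int k - 1) (int k) = (-1) ^ k * ?a N j"
    proof (cases N)
      case 0
      \<comment> \<open>here \<open>j = t - 1 - k \<noteq> t - 1\<close>, so \<open>x_(t-1)\<close> has no \<open>x_j\<close>-coefficient\<close>
      then show ?thesis
        using dfrak_eq_0_outside Suc j by (simp add: xcoeff_xj)
    next
      case (Suc N')
      then have "t + N' - k = j"
        using j assms(3) by arith
      then show ?thesis
        using dfrak_nat[of t N' k] Suc by simp
    qed
    have "(-1) ^ k' * ?a N j = (-1) ^ k' * ?a (Suc N) (Suc j) + (-1) ^ k' * ?a (Suc N) (Suc (Suc j))"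
      using rec by (metis distrib_left)
    then show ?thesis
      using dfrak_nat[of t N k] left right Suc j by simp
  qed
qed

lemma le_floor_half_iff: "(k \<le> \<lfloor>real_of_int m / 2\<rfloor>) = (2 * k \<le> m)"
proof -
  have "\<lfloor>real_of_int m / 2\<rfloor> = m div 2"
    by (metis floor_divide_of_int_eq of_int_numeral)
  then show ?thesis by presburger
qed

theorem lemma3p3:
  fixes t :: nat
  assumes "t \<ge> 1"
  shows "dfrak t 0 0 = 1
    \<and> (\<forall>n k :: int. (n < 0 \<or> k < 0 \<or> k > min \<lfloor>real_of_int (n - 1 + int t) / 2\<rfloor> n)
          \<longrightarrow> dfrak t n k = 0)
    \<and> (\<forall>n k :: int. \<not> (n < 0 \<or> k < 0 \<or> k > min \<lfloor>real_of_int (n - 1 + int t) / 2\<rfloor> n)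
          \<and> n > 0 \<longrightarrow> dfrak t n k = dfrak t (n - 1) (k - 1) + dfrak t (n - 1) k)"
proof (intro conjI allI impI)
  have "xcoeff (DinvPow 1 (xj (t - 1))) (Suc (Suc (t - 1))) = 0"
    by (rule xcoeff_DinvPow_xj_eq_0) simp
  then show "dfrak t 0 0 = 1"
    using dfrak_nat[of t 0 0] xcoeff_DinvPow_Suc_recurrence[of 0 "xj (t - 1)" "t - 1"] assms
    by (simp add: xcoeff_xj)
next
  fix n k :: int
  assume out: "n < 0 \<or> k < 0 \<or> k > min \<lfloor>real_of_int (n - 1 + int t) / 2\<rfloor> n"
  show "dfrak t n k = 0"
  proof (cases "k < 0 \<or> n < k")
    case False
    then have "0 \<le> k" "k \<le> n" "n - 1 + int t < 2 * k"
      using out le_floor_half_iff[of k "n - 1 + int t"] by auto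
    then obtain N k' where "n = int N + int k'" "k = int k'" "t + N \<le> k'"
      by (intro that[of "nat (n - k)" "nat k"]) auto
    then show ?thesis
      using dfrak_nat[of t N k'] xcoeff_DinvPow_Suc_0 by simp
  qed (rule dfrak_eq_0_outside)
next
  fix n k :: int
  assume "\<not> (n < 0 \<or> k < 0 \<or> k > min \<lfloor>real_of_int (n - 1 + int t) / 2\<rfloor> n) \<and> n > 0"
  then have "0 \<le> k" "k \<le> n" "0 < n" "2 * k \<le> n - 1 + int t"
    using le_floor_half_iff[of k "n - 1 + int t"] by auto
  then obtain N k' where "n = int N + int k'" "k = int k'" "0 < N + k'" "k' < t + N"
    by (intro that[of "nat (n - k)" "nat k"]) auto
  then show "dfrak t n k = dfrak t (n - 1) (k - 1) + dfrak t (n - 1) k"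
    using dfrak_recurrence_nat[OF assms] by simp
qed

end
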